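(* Let $\Delta\geq 1$ be an integer and let $G$ be a graph with $n$ vertices, $m$ edges and maximum degree $\Delta$. Then $$c(G)\;\leq\;1+n+\left(\frac{2^{\Delta+1}-\Delta-2}{\binom{\Delta+1}{2}}\right)m\;\leq\;1+\left(\frac{2^{\Delta+1}-1}{\Delta+1}\right)n.$$
   Context: All graphs are finite, simple and undirected. A clique of a graph $G$ is a (possibly empty) set of pairwise adjacent vertices; $c(G)$ denotes the number of cliques of $G$ (including the empty clique, all single vertices and all edges). *)

theory Defs
  imports Complex_Main
begin

definition simple_graph :: "'a set \<Rightarrow> 'a set set \<Rightarrow> bool" where
  "simple_graph V E \<longleftrightarrow> finite V \<and> (\<forall>e\<in>E. e \<subseteq> V \<and> card e = 2)"

definition degree :: "'a set set \<Rightarrow> 'a \<Rightarrow> nat" where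
  "degree E v = card {e\<in>E. v \<in> e}"

definition max_degree :: "'a set \<Rightarrow> 'a set set \<Rightarrow> nat" where
  "max_degree V E = Max (degree E ` V)"

definition is_clique :: "'a set \<Rightarrow> 'a set set \<Rightarrow> 'a set \<Rightarrow> bool" where
  "is_clique V E S \<longleftrightarrow> S \<subseteq> V \<and> (\<forall>u\<in>S. \<forall>v\<in>S. u \<noteq> v \<longrightarrow> {u, v} \<in> E)"

definition num_cliques :: "'a set \<Rightarrow> 'a set set \<Rightarrow> nat" where
  "num_cliques V E = card {S. is_clique V E S}"

end

theory Submission
  imports Defs
begin

text \<open>Every clique \<open>K\<close> with at least two vertices spreads a unit weight evenly over its
  \<open>|K| choose 2\<close> edges. The cliques containing an edge \<open>uv\<close> are \<open>uv\<close> together with a subset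
  of the common neighbourhood of \<open>u\<close> and \<open>v\<close>, which has at most \<open>\<Delta> - 1\<close> vertices; hence \<open>uv\<close>
  receives weight at most \<open>\<Sum>j. (\<Delta>-1 choose j) / (j+2 choose 2)\<close>, and the identity
  \<open>(\<Delta>-1 choose j) (\<Delta>+1 choose 2) = (\<Delta>+1 choose j+2) (j+2 choose 2)\<close> turns this sum into
  \<open>(2^(\<Delta>+1) - \<Delta> - 2) / (\<Delta>+1 choose 2)\<close>. The empty clique and the singletons add \<open>1 + n\<close>,
  and the second inequality is the handshake bound \<open>2m \<le> \<Delta> n\<close>.\<close>

lemma sum_Pow_card_eq:
  fixes f :: "nat \<Rightarrow> 'b::semiring_1"
  assumes "finite N"
  shows "(\<Sum>S\<in>Pow N. f (card S)) = (\<Sum>j\<le>card N. of_nat (card N choose j) * f j)"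
proof -
  have "(\<Sum>S\<in>Pow N. f (card S)) = (\<Sum>j\<le>card N. \<Sum>S\<in>{S. S \<subseteq> N \<and> card S = j}. f j)"
    by (subst sum.group[symmetric, where g = card and T = "{..card N}"])
      (auto simp: assms card_mono intro!: sum.cong)
  also have "\<dots> = (\<Sum>j\<le>card N. of_nat (card N choose j) * f j)"
    by (simp add: n_subsets[OF assms])
  finally show ?thesis .
qed

lemma sum_binomial_weighted_mono:
  fixes f :: "nat \<Rightarrow> 'b::linordered_semidom"
  assumes "n \<le> m" and "\<And>j. 0 \<le> f j"
  shows "(\<Sum>j\<le>n. of_nat (n choose j) * f j) \<le> (\<Sum>j\<le>m. of_nat (m choose j) * f j)"
proof -
  have "(\<Sum>j\<le>n. of_nat (n choose j) * f j) \<le> (\<Sum>j\<le>n. of_nat (m choose j) * f j)"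
    by (intro sum_mono mult_right_mono) (auto simp: binomial_right_mono assms)
  also have "\<dots> \<le> (\<Sum>j\<le>m. of_nat (m choose j) * f j)"
    by (rule sum_mono2) (auto simp: assms)
  finally show ?thesis .
qed

lemma sum_binomial_div_choose_2:
  "(\<Sum>j\<le>k. real (k choose j) / real ((j + 2) choose 2))
     = (2 ^ (k + 2) - real k - 3) / real ((k + 2) choose 2)"
proof -
  have term_eq: "real (k choose j) / real ((j + 2) choose 2)
      = real ((k + 2) choose (j + 2)) / real ((k + 2) choose 2)" if "j \<le> k" for j
  proof -
    have "((k + 2) choose (j + 2)) * ((j + 2) choose 2) = ((k + 2) choose 2) * (k choose j)"
      using choose_mult[of 2 "j + 2" "k + 2"] that by simp
    then have "real ((k + 2) choose (j + 2)) * real ((j + 2) choose 2)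
        = real ((k + 2) choose 2) * real (k choose j)"
      by (metis of_nat_mult)
    then show ?thesis
      by (simp add: field_simps)
  qed
  have "(2::real) ^ (k + 2) = (\<Sum>i\<le>Suc (Suc k). real (Suc (Suc k) choose i))"
    using choose_row_sum[of "k + 2"] by (metis of_nat_numeral of_nat_power of_nat_sum add_2_eq_Suc')
  also have "\<dots> = 1 + (real k + 2) + (\<Sum>j\<le>k. real ((k + 2) choose (j + 2)))"
    by (simp only: sum.atMost_Suc_shift binomial_n_0 binomial_1) simp
  finally have row_tail: "(\<Sum>j\<le>k. real ((k + 2) choose (j + 2))) = 2 ^ (k + 2) - real k - 3"
    by simp
  have "(\<Sum>j\<le>k. real (k choose j) / real ((j + 2) choose 2))
      = (\<Sum>j\<le>k. real ((k + 2) choose (j + 2)) / real ((k + 2) choose 2))"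
    by (intro sum.cong refl term_eq) simp
  also have "\<dots> = (2 ^ (k + 2) - real k - 3) / real ((k + 2) choose 2)"
    by (simp only: sum_divide_distrib[symmetric] row_tail)
  finally show ?thesis .
qed

lemma sum_Pow_inverse_choose_2_le:
  assumes "finite N" and "card N < d"
  shows "(\<Sum>S\<in>Pow N. 1 / real ((card S + 2) choose 2))
           \<le> (2 ^ (d + 1) - real d - 2) / real ((d + 1) choose 2)"
proof -
  obtain k where d: "d = Suc k" and "card N \<le> k"
    using assms(2) by (metis less_imp_Suc_add le_add1)
  have "(\<Sum>S\<in>Pow N. 1 / real ((card S + 2) choose 2))
      = (\<Sum>j\<le>card N. real (card N choose j) * (1 / real ((j + 2) choose 2)))"
    using sum_Pow_card_eq[OF assms(1), of "\<lambda>j. 1 / real ((j + 2) choose 2)"] by simp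
  also have "\<dots> \<le> (\<Sum>j\<le>k. real (k choose j) * (1 / real ((j + 2) choose 2)))"
    by (rule sum_binomial_weighted_mono) (use \<open>card N \<le> k\<close> in auto)
  also have "\<dots> = (2 ^ (d + 1) - real d - 2) / real ((d + 1) choose 2)"
    using sum_binomial_div_choose_2[of k] by (simp add: d)
  finally show ?thesis .
qed

lemma simple_graph_finite_edges: "simple_graph V E \<Longrightarrow> finite E"
  unfolding simple_graph_def by (metis PowI finite_Pow_iff finite_subset subsetI)

lemma finite_cliques: "finite V \<Longrightarrow> finite {K. is_clique V E K}"
  by (auto simp: is_clique_def intro: finite_subset[of _ "Pow V"])

lemma finite_clique: "finite V \<Longrightarrow> is_clique V E K \<Longrightarrow> finite K"
  by (auto simp: is_clique_def intro: finite_subset)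

lemma degree_le_max_degree: "finite V \<Longrightarrow> v \<in> V \<Longrightarrow> degree E v \<le> max_degree V E"
  by (simp add: max_degree_def)

lemma sum_degree_eq_twice_card_edges:
  assumes G: "simple_graph V E"
  shows "(\<Sum>v\<in>V. degree E v) = 2 * card E"
proof -
  have "(\<Sum>v\<in>V. degree E v) = (\<Sum>v\<in>V. \<Sum>e\<in>{e\<in>E. v \<in> e}. 1::nat)"
    by (simp add: degree_def)
  also have "\<dots> = (\<Sum>e\<in>E. \<Sum>v\<in>{v\<in>V. v \<in> e}. 1)"
    using G simple_graph_finite_edges[OF G] by (intro sum.swap_restrict) (auto simp: simple_graph_def)
  also have "\<dots> = (\<Sum>e\<in>E. 2)"
  proof (rule sum.cong[OF refl])
    fix e assume "e \<in> E"
    then have "{v\<in>V. v \<in> e} = e" and "card e = 2"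
      using G by (auto simp: simple_graph_def)
    then show "(\<Sum>v\<in>{v\<in>V. v \<in> e}. 1::nat) = 2"
      by simp
  qed
  finally show ?thesis
    by simp
qed

lemma twice_card_edges_le:
  assumes "simple_graph V E" and "\<forall>v\<in>V. degree E v \<le> d"
  shows "2 * card E \<le> d * card V"
proof -
  have "2 * card E = (\<Sum>v\<in>V. degree E v)"
    using sum_degree_eq_twice_card_edges[OF assms(1)] by simp
  also have "\<dots> \<le> (\<Sum>v\<in>V. d)"
    using assms(2) by (intro sum_mono) auto
  finally show ?thesis
    by (simp add: mult.commute)
qed

lemma card_cliques_card_less_2:
  assumes "finite V"
  shows "card {K. is_clique V E K \<and> card K < 2} = card V + 1"
proof -
  have "{K. is_clique V E K \<and> card K < 2} = insert {} ((\<lambda>v. {v}) ` V)"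
  proof (intro equalityI subsetI)
    fix K assume K: "K \<in> {K. is_clique V E K \<and> card K < 2}"
    then have "finite K" and "K \<subseteq> V"
      using assms finite_clique by (auto simp: is_clique_def)
    moreover have "card K = 0 \<or> card K = 1"
      using K by auto
    ultimately show "K \<in> insert {} ((\<lambda>v. {v}) ` V)"
      by (auto simp: card_1_singleton_iff)
  qed (auto simp: is_clique_def)
  moreover have "card ((\<lambda>v. {v}) ` V) = card V"
    by (rule card_image) (simp add: inj_on_def)
  moreover have "{} \<notin> (\<lambda>v. {v}) ` V"
    by auto
  ultimately show ?thesis
    using assms by simp
qed

definition common_neighbours :: "'a set set \<Rightarrow> 'a \<Rightarrow> 'a \<Rightarrow> 'a set" where
  "common_neighbours E u v = {w. {u, w} \<in> E \<and> {v, w} \<in> E}"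

lemma card_common_neighbours_less_degree:
  assumes G: "simple_graph V E" and uv: "{u, v} \<in> E"
  shows "card (common_neighbours E u v) < degree E u"
proof -
  let ?N = "common_neighbours E u v"
  have no_loops: "{w} \<notin> E" for w
    using G by (auto simp: simple_graph_def)
  have "finite V"
    using G by (simp add: simple_graph_def)
  moreover have "?N \<subseteq> V"
    using G by (auto simp: simple_graph_def common_neighbours_def)
  ultimately have fin_N: "finite ?N"
    by (rule finite_subset[rotated])
  have "v \<notin> ?N"
    using no_loops by (auto simp: common_neighbours_def)
  have "u \<notin> insert v ?N"
    using no_loops uv by (auto simp: common_neighbours_def)
  then have "inj_on (\<lambda>w. {u, w}) (insert v ?N)"
    by (auto simp: inj_on_def doubleton_eq_iff)
  moreover have "(\<lambda>w. {u, w}) ` insert v ?N \<subseteq> {e\<in>E. u \<in> e}"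
    using uv by (auto simp: common_neighbours_def)
  moreover have "finite {e\<in>E. u \<in> e}"
    using simple_graph_finite_edges[OF G] by simp
  ultimately have "card (insert v ?N) \<le> degree E u"
    unfolding degree_def by (metis card_image card_mono)
  then show ?thesis
    using fin_N \<open>v \<notin> ?N\<close> by simp
qed

lemma clique_diff_edge_subset_common_neighbours:
  "is_clique V E K \<Longrightarrow> {u, v} \<subseteq> K \<Longrightarrow> K - {u, v} \<subseteq> common_neighbours E u v"
  by (auto simp: is_clique_def common_neighbours_def)

lemma sum_cliques_containing_edge_le:
  assumes G: "simple_graph V E" and deg: "\<forall>v\<in>V. degree E v \<le> d" and "e \<in> E"
  shows "(\<Sum>K | is_clique V E K \<and> e \<subseteq> K. 1 / real (card K choose 2))
           \<le> (2 ^ (d + 1) - real d - 2) / real ((d + 1) choose 2)"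
proof -
  let ?K = "{K. is_clique V E K \<and> e \<subseteq> K}"
  have fin_V: "finite V"
    using G by (simp add: simple_graph_def)
  have "e \<subseteq> V" and card_e: "card e = 2"
    using G \<open>e \<in> E\<close> by (auto simp: simple_graph_def)
  then obtain u v where e: "e = {u, v}" and "u \<in> V"
    by (metis card_2_iff insert_subset)
  define N where "N = common_neighbours E u v"
  have "N \<subseteq> V"
    using G by (auto simp: N_def simple_graph_def common_neighbours_def)
  then have fin_N: "finite N"
    using fin_V by (rule finite_subset)
  have "card N < degree E u"
    unfolding N_def using card_common_neighbours_less_degree[OF G] \<open>e \<in> E\<close> by (simp add: e)
  also have "\<dots> \<le> d"
    using deg \<open>u \<in> V\<close> by simp
  finally have card_N: "card N < d" .
  have card_K: "card K = card (K - e) + 2" if "K \<in> ?K" for K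
  proof -
    have "finite K" and "e \<subseteq> K"
      using that fin_V finite_clique by auto
    moreover have "finite e"
      by (simp add: e)
    ultimately have "card e \<le> card K" and "card (K - e) = card K - card e"
      by (simp_all add: card_mono card_Diff_subset)
    then show ?thesis
      using card_e by simp
  qed
  have "inj_on (\<lambda>K. K - e) ?K"
  proof (rule inj_onI)
    fix K L assume "K \<in> ?K" "L \<in> ?K" "K - e = L - e"
    then show "K = L"
      by (metis Diff_partition mem_Collect_eq)
  qed
  have "(\<Sum>K\<in>?K. 1 / real (card K choose 2)) = (\<Sum>K\<in>?K. 1 / real ((card (K - e) + 2) choose 2))"
    by (rule sum.cong[OF refl], subst card_K) auto
  also have "\<dots> = (\<Sum>S\<in>(\<lambda>K. K - e) ` ?K. 1 / real ((card S + 2) choose 2))"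
    by (rule sum.reindex[symmetric, unfolded comp_def]) fact
  also have "\<dots> \<le> (\<Sum>S\<in>Pow N. 1 / real ((card S + 2) choose 2))"
  proof (rule sum_mono2)
    show "(\<lambda>K. K - e) ` ?K \<subseteq> Pow N"
      using clique_diff_edge_subset_common_neighbours[of V E _ u v] by (auto simp: N_def e)
  qed (simp_all add: fin_N)
  also have "\<dots> \<le> (2 ^ (d + 1) - real d - 2) / real ((d + 1) choose 2)"
    by (rule sum_Pow_inverse_choose_2_le[OF fin_N card_N])
  finally show ?thesis .
qed

lemma card_cliques_card_ge_2_eq:
  assumes G: "simple_graph V E"
  shows "real (card {K. is_clique V E K \<and> 2 \<le> card K})
           = (\<Sum>e\<in>E. \<Sum>K | is_clique V E K \<and> e \<subseteq> K. 1 / real (card K choose 2))"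
proof -
  let ?C = "{K. is_clique V E K \<and> 2 \<le> card K}"
  have fin_V: "finite V"
    using G by (simp add: simple_graph_def)
  have fin_C: "finite ?C"
    using finite_cliques[OF fin_V] by (rule rev_finite_subset) auto
  have edges_in_clique: "{e\<in>E. e \<subseteq> K} = {e. e \<subseteq> K \<and> card e = 2}" if "is_clique V E K" for K
  proof (intro equalityI subsetI)
    fix e assume "e \<in> {e\<in>E. e \<subseteq> K}"
    then show "e \<in> {e. e \<subseteq> K \<and> card e = 2}"
      using G by (simp add: simple_graph_def)
  next
    fix e assume "e \<in> {e. e \<subseteq> K \<and> card e = 2}"
    then obtain x y where "e = {x, y}" "x \<noteq> y" "x \<in> K" "y \<in> K"
      by (auto simp: card_2_iff)
    then show "e \<in> {e\<in>E. e \<subseteq> K}"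
      using that by (simp add: is_clique_def)
  qed
  have split_one: "(\<Sum>e\<in>{e\<in>E. e \<subseteq> K}. 1 / real (card K choose 2)) = 1" if "K \<in> ?C" for K
  proof -
    have "finite K"
      using that fin_V finite_clique by blast
    then have "card {e\<in>E. e \<subseteq> K} = card K choose 2"
      using that by (simp add: edges_in_clique n_subsets)
    moreover have "0 < card K choose 2"
      using that by simp
    ultimately show ?thesis
      by simp
  qed
  have cliques_containing_edge: "{K\<in>?C. e \<subseteq> K} = {K. is_clique V E K \<and> e \<subseteq> K}" if "e \<in> E" for e
  proof -
    have "card e = 2"
      using that G by (simp add: simple_graph_def)
    moreover have "card e \<le> card K" if "is_clique V E K" "e \<subseteq> K" for K
      using that fin_V finite_clique card_mono by blast
    ultimately show ?thesis
      by auto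
  qed
  have "real (card ?C) = (\<Sum>K\<in>?C. 1)"
    by simp
  also have "\<dots> = (\<Sum>K\<in>?C. \<Sum>e\<in>{e\<in>E. e \<subseteq> K}. 1 / real (card K choose 2))"
    by (rule sum.cong[OF refl]) (simp only: split_one)
  also have "\<dots> = (\<Sum>e\<in>E. \<Sum>K\<in>{K\<in>?C. e \<subseteq> K}. 1 / real (card K choose 2))"
    by (rule sum.swap_restrict[OF fin_C simple_graph_finite_edges[OF G]])
  also have "\<dots> = (\<Sum>e\<in>E. \<Sum>K | is_clique V E K \<and> e \<subseteq> K. 1 / real (card K choose 2))"
    by (rule sum.cong[OF refl]) (simp only: cliques_containing_edge)
  finally show ?thesis .
qed

lemma num_cliques_le:
  assumes G: "simple_graph V E" and deg: "\<forall>v\<in>V. degree E v \<le> d"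
  shows "real (num_cliques V E)
           \<le> 1 + real (card V) + ((2 ^ (d + 1) - real d - 2) / real ((d + 1) choose 2)) * real (card E)"
proof -
  have fin_V: "finite V"
    using G by (simp add: simple_graph_def)
  let ?small = "{K. is_clique V E K \<and> card K < 2}" and ?large = "{K. is_clique V E K \<and> 2 \<le> card K}"
  have "finite ?small" and "finite ?large"
    using finite_cliques[OF fin_V] by (auto intro: rev_finite_subset)
  then have "card (?small \<union> ?large) = card ?small + card ?large"
    by (rule card_Un_disjoint) auto
  moreover have "?small \<union> ?large = {K. is_clique V E K}"
    by auto
  ultimately have "num_cliques V E = card ?small + card ?large"
    by (simp add: num_cliques_def)
  moreover have "real (card ?large) \<le> (\<Sum>e\<in>E. (2 ^ (d + 1) - real d - 2) / real ((d + 1) choose 2))"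
    unfolding card_cliques_card_ge_2_eq[OF G]
    by (intro sum_mono sum_cliques_containing_edge_le[OF G deg])
  ultimately show ?thesis
    by (simp add: card_cliques_card_less_2[OF fin_V] mult.commute)
qed

lemma edge_bound_le_vertex_bound:
  fixes d m n :: nat
  assumes "1 \<le> d" and "2 * m \<le> d * n"
  shows "1 + real n + ((2 ^ (d + 1) - real d - 2) / real ((d + 1) choose 2)) * real m
           \<le> 1 + ((2 ^ (d + 1) - 1) / real (d + 1)) * real n"
proof -
  let ?X = "2 ^ (d + 1) - real d - 2"
  have "d + 2 \<le> (2::nat) ^ (d + 1)"
    using less_exp[of "d + 1"] by simp
  then have "real (d + 2) \<le> real ((2::nat) ^ (d + 1))"
    by (rule of_nat_mono)
  then have "0 \<le> ?X"
    by simp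
  have "2 * (Suc d choose 2) = Suc d * d"
    by (simp add: choose_two)
  then have choose: "real ((d + 1) choose 2) = real (d + 1) * real d / 2"
    by (metis Suc_eq_plus1 nonzero_mult_div_cancel_left of_nat_mult of_nat_numeral zero_neq_numeral)
  have "?X / real ((d + 1) choose 2) * real m \<le> ?X / real ((d + 1) choose 2) * (real d * real n / 2)"
    using \<open>0 \<le> ?X\<close> assms(2) by (intro mult_left_mono) (auto simp: of_nat_mult[symmetric] simp del: of_nat_mult)
  also have "\<dots> = ?X / real (d + 1) * real n"
    unfolding choose using assms(1) by (simp add: divide_simps) (simp add: algebra_simps)
  also have "\<dots> = (2 ^ (d + 1) - 1) / real (d + 1) * real n - real n"
    by (simp add: field_simps)
  finally show ?thesis
    by simp
qed

theorem theorem3: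
  fixes V :: "'a set" and E :: "'a set set" and \<Delta> :: nat
  assumes "simple_graph V E"
    and "\<Delta> \<ge> 1"
    and "max_degree V E = \<Delta>"
  shows "real (num_cliques V E)
           \<le> 1 + real (card V) + ((2 ^ (\<Delta> + 1) - real \<Delta> - 2) / real ((\<Delta> + 1) choose 2)) * real (card E)
         \<and> 1 + real (card V) + ((2 ^ (\<Delta> + 1) - real \<Delta> - 2) / real ((\<Delta> + 1) choose 2)) * real (card E)
           \<le> 1 + ((2 ^ (\<Delta> + 1) - 1) / real (\<Delta> + 1)) * real (card V)"
proof -
  have "finite V"
    using assms(1) by (simp add: simple_graph_def)
  then have deg: "\<forall>v\<in>V. degree E v \<le> \<Delta>"
    using degree_le_max_degree[of V _ E] unfolding assms(3) by blast
  show ?thesis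
    by (intro conjI num_cliques_le[OF assms(1) deg]
        edge_bound_le_vertex_bound[OF assms(2) twice_card_edges_le[OF assms(1) deg]])
qed

end
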